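(* Let $\mathbf{A}=(a_{ij})$ be an $m\times n$ binary array (each entry is $0$ or $1$) with row set $R$ and column set $C$, and assume no row and no column of $\mathbf{A}$ consists only of zeros. For $X\subset R$ and $Y\subset C$ define \[ V(X)=\sum_{i\in X}\sum_{j\in C}a_{ij},\qquad V(Y)=\sum_{i\in R}\sum_{j\in Y}a_{ij},\qquad a(X,Y)=\sum_{i\in X}\sum_{j\in Y}a_{ij}, \] and for nonempty $X\subset R$, $Y\subset C$ define $d(X,Y)=\dfrac{a(X,Y)}{V(X)\,V(Y)}$. Let $0<\delta<\frac14$, let $X\subset R$ and $Y\subset C$ be nonempty, and let $X^*\subset X$ and $Y^*\subset Y$ satisfy $\frac{V(X^* )}{V(X)}\ge 1-\delta$ and $\frac{V(Y^* )}{V(Y)}\ge 1-\delta$. Then \[ |d(X,Y)-d(X^*,Y^* )|\le 4\delta . \] *)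

theory Defs
  imports Main Complex_Main
begin

definition binary_array :: "'r set \<Rightarrow> 'c set \<Rightarrow> ('r \<Rightarrow> 'c \<Rightarrow> real) \<Rightarrow> bool" where
  "binary_array R C a \<longleftrightarrow> finite R \<and> finite C \<and> (\<forall>i\<in>R. \<forall>j\<in>C. a i j = 0 \<or> a i j = 1)"

definition no_zero_lines :: "'r set \<Rightarrow> 'c set \<Rightarrow> ('r \<Rightarrow> 'c \<Rightarrow> real) \<Rightarrow> bool" where
  "no_zero_lines R C a \<longleftrightarrow> (\<forall>i\<in>R. \<exists>j\<in>C. a i j \<noteq> 0) \<and> (\<forall>j\<in>C. \<exists>i\<in>R. a i j \<noteq> 0)"

definition Vrow :: "'c set \<Rightarrow> ('r \<Rightarrow> 'c \<Rightarrow> real) \<Rightarrow> 'r set \<Rightarrow> real" where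
  "Vrow C a X = (\<Sum>i\<in>X. \<Sum>j\<in>C. a i j)"

definition Vcol :: "'r set \<Rightarrow> ('r \<Rightarrow> 'c \<Rightarrow> real) \<Rightarrow> 'c set \<Rightarrow> real" where
  "Vcol R a Y = (\<Sum>i\<in>R. \<Sum>j\<in>Y. a i j)"

definition aXY :: "('r \<Rightarrow> 'c \<Rightarrow> real) \<Rightarrow> 'r set \<Rightarrow> 'c set \<Rightarrow> real" where
  "aXY a X Y = (\<Sum>i\<in>X. \<Sum>j\<in>Y. a i j)"

definition dens :: "'r set \<Rightarrow> 'c set \<Rightarrow> ('r \<Rightarrow> 'c \<Rightarrow> real) \<Rightarrow> 'r set \<Rightarrow> 'c set \<Rightarrow> real" where
  "dens R C a X Y = aXY a X Y / (Vrow C a X * Vcol R a Y)"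

end

theory Submission imports Defs begin

text \<open>Write \<open>P = V(X)\<close>, \<open>Q = V(Y)\<close>, \<open>A = a(X,Y)\<close> and starred versions for \<open>X*, Y*\<close>.
  Every entry of \<open>X \<times> Y\<close> outside \<open>X* \<times> Y*\<close> lies in a row of \<open>X - X*\<close> or a column of
  \<open>Y - Y*\<close>, so \<open>A - A* \<le> (P - P*) + (Q - Q*) \<le> \<delta>(P + Q)\<close>; since \<open>P, Q \<ge> 1\<close> this moves the
  density down by at most \<open>2\<delta>\<close>. Conversely \<open>P* Q* \<ge> (1 - \<delta>)\<^sup>2 P Q\<close> and \<open>A \<le> P Q\<close>, so the
  density moves up by at most \<open>1/(1 - \<delta>)\<^sup>2 - 1 \<le> 4\<delta>\<close>.\<close>

lemma inverse_one_minus_squared_le: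
  fixes d :: real
  assumes "0 \<le> d" and "d < 1/4"
  shows "1 / (1 - d)\<^sup>2 \<le> 1 + 4 * d"
proof -
  have "(1 + 4 * d) * (1 - d)\<^sup>2 = 1 + d * (2 - 7 * d + 4 * d\<^sup>2)"
    by (simp add: power2_eq_square algebra_simps)
  moreover have "0 \<le> d * (2 - 7 * d + 4 * d\<^sup>2)"
    using assms by (intro mult_nonneg_nonneg) (auto simp: power2_eq_square)
  ultimately have "1 \<le> (1 + 4 * d) * (1 - d)\<^sup>2" by linarith
  moreover have "0 < (1 - d)\<^sup>2" using assms by simp
  ultimately show ?thesis by (simp add: divide_le_eq)
qed

lemma density_decrease_le:
  fixes P Q Ps Qs A As d :: real
  assumes "1 \<le> P" and "1 \<le> Q" and "(1 - d) * P \<le> Ps" and "(1 - d) * Q \<le> Qs"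
    and "Ps \<le> P" and "Qs \<le> Q" and "0 \<le> As" and "A \<le> As + (P - Ps) + (Q - Qs)"
    and "0 \<le> d" and "d < 1"
  shows "A / (P * Q) - As / (Ps * Qs) \<le> 2 * d"
proof -
  have "0 < (1 - d) * P" "0 < (1 - d) * Q" using assms by simp_all
  then have "0 < Ps" "0 < Qs" using assms by linarith+
  have "As / (P * Q) \<le> As / (Ps * Qs)"
    using assms \<open>0 < Ps\<close> \<open>0 < Qs\<close> by (intro frac_le mult_mono) auto
  moreover have "(A - As) / (P * Q) \<le> (d * P + d * Q) / (P * Q)"
    using assms by (intro divide_right_mono) (auto simp: algebra_simps)
  moreover have "(d * P + d * Q) / (P * Q) = d / Q + d / P"
    using assms by (simp add: field_simps)
  moreover have "d / Q \<le> d" and "d / P \<le> d"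
    using assms by (simp_all add: divide_le_eq mult_le_cancel_left1)
  ultimately show ?thesis by (simp add: diff_divide_distrib)
qed

lemma density_increase_le:
  fixes P Q Ps Qs A As d :: real
  assumes "1 \<le> P" and "1 \<le> Q" and "(1 - d) * P \<le> Ps" and "(1 - d) * Q \<le> Qs"
    and "0 \<le> As" and "As \<le> A" and "A \<le> P" and "0 \<le> d" and "d < 1/4"
  shows "As / (Ps * Qs) - A / (P * Q) \<le> 4 * d"
proof -
  have "0 \<le> A" using assms by linarith
  have PQ: "0 < P * Q" using assms by simp
  have k: "0 < (1 - d)\<^sup>2" using assms by simp
  have "0 < (1 - d) * P" "0 < (1 - d) * Q" using assms by simp_all
  then have "0 < Ps" "0 < Qs" using assms by linarith+
  have kPQ: "(1 - d)\<^sup>2 * (P * Q) \<le> Ps * Qs"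
  proof -
    have "(1 - d)\<^sup>2 * (P * Q) = ((1 - d) * P) * ((1 - d) * Q)"
      by (simp add: power2_eq_square algebra_simps)
    also have "\<dots> \<le> Ps * Qs"
      using assms \<open>0 < Ps\<close> \<open>0 < (1 - d) * Q\<close> by (intro mult_mono) auto
    finally show ?thesis .
  qed
  have "As / (Ps * Qs) \<le> A / (Ps * Qs)"
    using assms \<open>0 < Ps\<close> \<open>0 < Qs\<close> by (intro divide_right_mono) auto
  also have "\<dots> \<le> A / ((1 - d)\<^sup>2 * (P * Q))"
    using kPQ k PQ \<open>0 \<le> A\<close> by (intro frac_le) auto
  also have "\<dots> = A / (P * Q) * (1 / (1 - d)\<^sup>2)" by simp
  also have "\<dots> \<le> A / (P * Q) * (1 + 4 * d)"
    using inverse_one_minus_squared_le[OF \<open>0 \<le> d\<close> \<open>d < 1/4\<close>] \<open>0 \<le> A\<close> PQ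
    by (intro mult_left_mono) auto
  finally have "As / (Ps * Qs) - A / (P * Q) \<le> A / (P * Q) * (4 * d)"
    by (simp add: algebra_simps)
  also have "\<dots> \<le> 1 * (4 * d)"
  proof (rule mult_right_mono)
    have "P \<le> P * Q" using assms by (simp add: mult_le_cancel_left1)
    then have "A \<le> P * Q" using assms by linarith
    then show "A / (P * Q) \<le> 1" using PQ by (simp add: divide_le_eq)
  qed (use assms in simp)
  finally show ?thesis by simp
qed

lemma density_perturbation_le:
  fixes P Q Ps Qs A As d :: real
  assumes "1 \<le> P" and "1 \<le> Q" and "(1 - d) * P \<le> Ps" and "(1 - d) * Q \<le> Qs"
    and "Ps \<le> P" and "Qs \<le> Q" and "0 \<le> As" and "As \<le> A" and "A \<le> P"
    and "A \<le> As + (P - Ps) + (Q - Qs)" and "0 \<le> d" and "d < 1/4"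
  shows "\<bar>A / (P * Q) - As / (Ps * Qs)\<bar> \<le> 4 * d"
  using density_decrease_le[of P Q d Ps Qs As A] density_increase_le[of P Q d Ps Qs As A] assms
  by linarith

locale nonneg_array =
  fixes R :: "'r set" and C :: "'c set" and a :: "'r \<Rightarrow> 'c \<Rightarrow> real"
  assumes finite_R: "finite R" and finite_C: "finite C"
    and nonneg: "\<And>i j. i \<in> R \<Longrightarrow> j \<in> C \<Longrightarrow> 0 \<le> a i j"

lemma binary_array_imp_nonneg_array:
  assumes "binary_array R C a"
  shows "nonneg_array R C a"
  using assms unfolding binary_array_def nonneg_array_def by force

context nonneg_array
begin

lemma aXY_nonneg: "X \<subseteq> R \<Longrightarrow> Y \<subseteq> C \<Longrightarrow> 0 \<le> aXY a X Y"
  unfolding aXY_def using nonneg by (intro sum_nonneg) blast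

lemma Vrow_mono:
  assumes "Xs \<subseteq> X" and "X \<subseteq> R"
  shows "Vrow C a Xs \<le> Vrow C a X"
  unfolding Vrow_def using assms nonneg finite_R finite_subset
  by (intro sum_mono2 sum_nonneg) auto

lemma Vcol_mono:
  assumes "Ys \<subseteq> Y" and "Y \<subseteq> C"
  shows "Vcol R a Ys \<le> Vcol R a Y"
  unfolding Vcol_def using assms nonneg finite_C finite_subset
  by (intro sum_mono sum_mono2) auto

lemma aXY_mono:
  assumes "Xs \<subseteq> X" and "X \<subseteq> R" and "Ys \<subseteq> Y" and "Y \<subseteq> C"
  shows "aXY a Xs Ys \<le> aXY a X Y"
proof -
  have "aXY a Xs Ys \<le> aXY a Xs Y"
    unfolding aXY_def using assms finite_C finite_subset
    by (intro sum_mono sum_mono2) (auto intro!: nonneg)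
  also have "\<dots> \<le> aXY a X Y"
    unfolding aXY_def using assms finite_R finite_subset
    by (intro sum_mono2 sum_nonneg) (auto intro!: nonneg)
  finally show ?thesis .
qed

lemma Vrow_split:
  assumes "Xs \<subseteq> X" and "X \<subseteq> R"
  shows "Vrow C a X = Vrow C a Xs + Vrow C a (X - Xs)"
  unfolding Vrow_def
  by (simp add: sum.subset_diff[OF assms(1) finite_subset[OF assms(2) finite_R]] add.commute)

lemma aXY_split_rows:
  assumes "Xs \<subseteq> X" and "X \<subseteq> R"
  shows "aXY a X Y = aXY a Xs Y + aXY a (X - Xs) Y"
  unfolding aXY_def
  by (simp add: sum.subset_diff[OF assms(1) finite_subset[OF assms(2) finite_R]] add.commute)

lemma aXY_split_cols:
  assumes "Ys \<subseteq> Y" and "Y \<subseteq> C"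
  shows "aXY a X Y = aXY a X Ys + aXY a X (Y - Ys)"
  unfolding aXY_def
  by (simp add: sum.subset_diff[OF assms(1) finite_subset[OF assms(2) finite_C]] sum.distrib add.commute)

lemma Vcol_split:
  assumes "Ys \<subseteq> Y" and "Y \<subseteq> C"
  shows "Vcol R a Y = Vcol R a Ys + Vcol R a (Y - Ys)"
  using aXY_split_cols[OF assms] unfolding Vcol_def aXY_def .

lemma aXY_le_Vrow:
  assumes "X \<subseteq> R" and "Y \<subseteq> C"
  shows "aXY a X Y \<le> Vrow C a X"
  unfolding aXY_def Vrow_def
proof (rule sum_mono)
  fix i assume "i \<in> X"
  then show "(\<Sum>j\<in>Y. a i j) \<le> (\<Sum>j\<in>C. a i j)"
    using assms nonneg finite_C by (intro sum_mono2) auto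
qed

lemma aXY_le_Vcol:
  assumes "X \<subseteq> R" and "Y \<subseteq> C"
  shows "aXY a X Y \<le> Vcol R a Y"
  unfolding aXY_def Vcol_def
proof (rule sum_mono2[OF finite_R assms(1)])
  fix i assume "i \<in> R - X"
  then show "0 \<le> (\<Sum>j\<in>Y. a i j)" using assms nonneg by (intro sum_nonneg) auto
qed

lemma aXY_le_aXY_add_losses:
  assumes "Xs \<subseteq> X" and "X \<subseteq> R" and "Ys \<subseteq> Y" and "Y \<subseteq> C"
  shows "aXY a X Y \<le> aXY a Xs Ys + (Vrow C a X - Vrow C a Xs) + (Vcol R a Y - Vcol R a Ys)"
proof -
  have "aXY a X Y = aXY a Xs Ys + aXY a Xs (Y - Ys) + aXY a (X - Xs) Y"
    using assms aXY_split_rows aXY_split_cols by simp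
  moreover have "aXY a (X - Xs) Y \<le> Vrow C a (X - Xs)"
    using assms by (intro aXY_le_Vrow) auto
  moreover have "aXY a Xs (Y - Ys) \<le> Vcol R a (Y - Ys)"
    using assms by (intro aXY_le_Vcol) auto
  ultimately show ?thesis
    using assms Vrow_split Vcol_split by simp
qed

lemma entry_le_Vrow:
  assumes "X \<subseteq> R" and "i \<in> X" and "j \<in> C"
  shows "a i j \<le> Vrow C a X"
proof -
  have "a i j \<le> (\<Sum>j\<in>C. a i j)"
    using assms nonneg finite_C by (intro member_le_sum) auto
  also have "\<dots> \<le> Vrow C a X"
    unfolding Vrow_def using assms nonneg finite_R finite_subset
    by (intro member_le_sum[where f = "\<lambda>i. \<Sum>j\<in>C. a i j"] sum_nonneg) auto
  finally show ?thesis .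
qed

lemma entry_le_Vcol:
  assumes "Y \<subseteq> C" and "i \<in> R" and "j \<in> Y"
  shows "a i j \<le> Vcol R a Y"
proof -
  have "a i j \<le> (\<Sum>j\<in>Y. a i j)"
    using assms nonneg finite_C finite_subset by (intro member_le_sum) auto
  also have "\<dots> \<le> Vcol R a Y"
    unfolding Vcol_def using assms nonneg finite_R
    by (intro member_le_sum[where f = "\<lambda>i. \<Sum>j\<in>Y. a i j"] sum_nonneg) auto
  finally show ?thesis .
qed

end

lemma Vrow_ge_one:
  assumes "binary_array R C a" and "no_zero_lines R C a" and "X \<subseteq> R" and "X \<noteq> {}"
  shows "1 \<le> Vrow C a X"
proof -
  obtain i j where "i \<in> X" "j \<in> C" "a i j \<noteq> 0"
    using assms unfolding no_zero_lines_def by blast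
  moreover from this have "a i j = 1"
    using assms unfolding binary_array_def by blast
  ultimately show ?thesis
    using nonneg_array.entry_le_Vrow[OF binary_array_imp_nonneg_array[OF assms(1)] assms(3)]
    by fastforce
qed

lemma Vcol_ge_one:
  assumes "binary_array R C a" and "no_zero_lines R C a" and "Y \<subseteq> C" and "Y \<noteq> {}"
  shows "1 \<le> Vcol R a Y"
proof -
  obtain i j where "i \<in> R" "j \<in> Y" "a i j \<noteq> 0"
    using assms unfolding no_zero_lines_def by blast
  moreover from this have "a i j = 1"
    using assms unfolding binary_array_def by blast
  ultimately show ?thesis
    using nonneg_array.entry_le_Vcol[OF binary_array_imp_nonneg_array[OF assms(1)] assms(3)]
    by fastforce
qed

theorem mainTheorem1:
  fixes R :: "'r set" and C :: "'c set" and a :: "'r \<Rightarrow> 'c \<Rightarrow> real"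
    and \<delta> :: real and X Xs :: "'r set" and Y Ys :: "'c set"
  assumes "binary_array R C a"
    and "no_zero_lines R C a"
    and "0 < \<delta>" and "\<delta> < 1/4"
    and "X \<subseteq> R" and "X \<noteq> {}" and "Y \<subseteq> C" and "Y \<noteq> {}"
    and "Xs \<subseteq> X" and "Ys \<subseteq> Y"
    and "Vrow C a Xs / Vrow C a X \<ge> 1 - \<delta>"
    and "Vcol R a Ys / Vcol R a Y \<ge> 1 - \<delta>"
  shows "\<bar>dens R C a X Y - dens R C a Xs Ys\<bar> \<le> 4 * \<delta>"
proof -
  interpret nonneg_array R C a
    using assms(1) by (rule binary_array_imp_nonneg_array)
  have "1 \<le> Vrow C a X" "1 \<le> Vcol R a Y"
    using Vrow_ge_one[OF assms(1,2,5,6)] Vcol_ge_one[OF assms(1,2,7,8)] .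
  then show ?thesis
    unfolding dens_def
  proof (rule density_perturbation_le)
    show "(1 - \<delta>) * Vrow C a X \<le> Vrow C a Xs" "(1 - \<delta>) * Vcol R a Y \<le> Vcol R a Ys"
      using assms(11,12) \<open>1 \<le> Vrow C a X\<close> \<open>1 \<le> Vcol R a Y\<close> by (simp_all add: le_divide_eq)
    show "Vrow C a Xs \<le> Vrow C a X" "Vcol R a Ys \<le> Vcol R a Y"
      using Vrow_mono[OF assms(9,5)] Vcol_mono[OF assms(10,7)] .
    show "0 \<le> aXY a Xs Ys"
      using assms(5,7,9,10) by (intro aXY_nonneg) auto
    show "aXY a Xs Ys \<le> aXY a X Y"
      using aXY_mono[OF assms(9,5,10,7)] .
    show "aXY a X Y \<le> Vrow C a X"
      using aXY_le_Vrow[OF assms(5,7)] .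
    show "aXY a X Y \<le> aXY a Xs Ys + (Vrow C a X - Vrow C a Xs) + (Vcol R a Y - Vcol R a Ys)"
      using aXY_le_aXY_add_losses[OF assms(9,5,10,7)] .
  qed (use assms(3,4) in auto)
qed

end
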